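(* For any history $\mathcal{F}_{t-1}$, conditioned on the event $E^f(t)$, \[ \mathbb{P}\big(\mathbf{x}_t\in\mathcal{X}\setminus S_t\mid\mathcal{F}_{t-1}\big)\ge p-1/t^2,\qquad p=\frac{1}{4e\sqrt{\pi}}. \]
   Context: $\mathcal{X}$ is a finite subset of the unit ball of $\mathbb{R}^d$; $f\sim\mathcal{GP}(0,k)$ with $k$ the NTK; observations $y=f(\mathbf{x})+\zeta$, $\zeta\sim\mathcal{N}(0,\sigma^2)$. Queries indexed sequentially; $\mathrm{fb}[t]$ is the largest index whose observation is available when $\mathbf{x}_t$ is chosen ($t-\mathrm{fb}[t]\le B$). $\mu_{\mathrm{fb}[t]},\sigma_{\mathrm{fb}[t]}$: GP posterior mean/std given observations $1,\dots,\mathrm{fb}[t]$; $\mathcal{F}_{t-1}$ the collected inputs/outputs plus pending inputs $\mathbf{x}_{\mathrm{fb}[t]+1},\dots,\mathbf{x}_{t-1}$. $\beta_t=2\log(\pi^2t^2|\mathcal{X}|/(3\delta))$, $c_t=\beta_t(1+\sqrt{2\log(|\mathcal{X}|t^2)})$. Given $\mathcal{F}_{t-1}$, $f_t\sim\mathcal{GP}(\mu_{\mathrm{fb}[t]},\beta_t^2\sigma^2_{\mathrm{fb}[t]})$ and $\mathbf{x}_t=\arg\max_{\mathbf{x}\in\mathcal{X}}f_t(\mathbf{x})$. $E^f(t)$: $|\mu_{\mathrm{fb}[t]}(\mathbf{x})-f(\mathbf{x})|\le\beta_t\sigma_{\mathrm{fb}[t]}(\mathbf{x})$ for all $\mathbf{x}$.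 With $\mathbf{x}^*$ a maximizer of $f$ and $\Delta(\mathbf{x})=f(\mathbf{x}^* )-f(\mathbf{x})$, the saturated set is $S_t=\{\mathbf{x}\in\mathcal{X}:\Delta(\mathbf{x})>c_t\sigma_{\mathrm{fb}[t]}(\mathbf{x})\}$. *)

theory Defs
  imports "HOL-Analysis.Analysis" "HOL-Probability.Probability"
begin

definition reg_gram_solve ::
  "('a \<Rightarrow> 'a \<Rightarrow> real) \<Rightarrow> real \<Rightarrow> 'a list \<Rightarrow> (nat \<Rightarrow> real) \<Rightarrow> (nat \<Rightarrow> real)" where
  "reg_gram_solve k s2 xs b =
     (THE a. (\<forall>i<length xs. (\<Sum>j<length xs. (k (xs!i) (xs!j) + (if i = j then s2 else 0)) * a j) = b i)
           \<and> (\<forall>i. length xs \<le> i \<longrightarrow> a i = 0))"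

definition post_mean ::
  "('a \<Rightarrow> 'a \<Rightarrow> real) \<Rightarrow> real \<Rightarrow> 'a list \<Rightarrow> real list \<Rightarrow> 'a \<Rightarrow> real" where
  "post_mean k s2 xs ys x =
     (\<Sum>i<length xs. k x (xs!i) * reg_gram_solve k s2 xs (\<lambda>j. ys!j) i)"

definition post_cov ::
  "('a \<Rightarrow> 'a \<Rightarrow> real) \<Rightarrow> real \<Rightarrow> 'a list \<Rightarrow> 'a \<Rightarrow> 'a \<Rightarrow> real" where
  "post_cov k s2 xs x x' =
     k x x' - (\<Sum>i<length xs. k x (xs!i) * reg_gram_solve k s2 xs (\<lambda>j. k (xs!j) x') i)"

definition post_sd ::
  "('a \<Rightarrow> 'a \<Rightarrow> real) \<Rightarrow> real \<Rightarrow> 'a list \<Rightarrow> 'a \<Rightarrow> real" where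
  "post_sd k s2 xs x = sqrt (post_cov k s2 xs x x)"

definition gaussian_rv :: "'s measure \<Rightarrow> ('s \<Rightarrow> real) \<Rightarrow> real \<Rightarrow> real \<Rightarrow> bool" where
  "gaussian_rv M Y m v \<longleftrightarrow> 0 \<le> v \<and> Y \<in> borel_measurable M \<and>
     (if v = 0 then (AE \<omega> in M. Y \<omega> = m)
      else distributed M lborel Y (normal_density m (sqrt v)))"

definition gaussian_process_on ::
  "'s measure \<Rightarrow> 'a set \<Rightarrow> ('s \<Rightarrow> 'a \<Rightarrow> real) \<Rightarrow> ('a \<Rightarrow> real) \<Rightarrow> ('a \<Rightarrow> 'a \<Rightarrow> real) \<Rightarrow> bool" where
  "gaussian_process_on M X F m C \<longleftrightarrow>
     (\<forall>a :: 'a \<Rightarrow> real. gaussian_rv M (\<lambda>\<omega>. \<Sum>x\<in>X. a x * F \<omega> x)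
        (\<Sum>x\<in>X. a x * m x) (\<Sum>x\<in>X. \<Sum>y\<in>X. a x * a y * C x y))"

definition psd_kernel_on :: "'a set \<Rightarrow> ('a \<Rightarrow> 'a \<Rightarrow> real) \<Rightarrow> bool" where
  "psd_kernel_on X k \<longleftrightarrow> (\<forall>x\<in>X. \<forall>y\<in>X. k x y = k y x) \<and>
     (\<forall>A a. finite A \<longrightarrow> A \<subseteq> X \<longrightarrow> 0 \<le> (\<Sum>x\<in>A. \<Sum>y\<in>A. a x * a y * k x y))"

definition beta_t :: "nat \<Rightarrow> nat \<Rightarrow> real \<Rightarrow> real" where
  "beta_t t N \<delta> = 2 * ln (pi^2 * real t^2 * real N / (3 * \<delta>))"

definition c_t :: "nat \<Rightarrow> nat \<Rightarrow> real \<Rightarrow> real" where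
  "c_t t N \<delta> = beta_t t N \<delta> * (1 + sqrt (2 * ln (real N * real t^2)))"

definition saturated_set ::
  "'a set \<Rightarrow> ('a \<Rightarrow> real) \<Rightarrow> 'a \<Rightarrow> real \<Rightarrow> ('a \<Rightarrow> real) \<Rightarrow> 'a set" where
  "saturated_set X f xstar c sd = {x \<in> X. f xstar - f x > c * sd x}"

end

theory Submission
  imports Defs "HOL-Real_Asymp.Real_Asymp"
begin

text \<open>Let \<open>a = sqrt (2 ln (|X| t\<^sup>2))\<close>. With probability at least \<open>\<phi>(1)/2 \<ge> p\<close> the sample
  \<open>f\<^sub>t\<close> exceeds its mean by one (scaled) standard deviation at \<open>x\<^sup>*\<close>, so that \<open>f(x\<^sup>*) \<le> f\<^sub>t(x\<^sup>*)\<close>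
  on \<open>E\<^sup>f(t)\<close>. By the Gaussian tail bound and a union bound, \<open>f\<^sub>t(x) \<le> \<mu>(x) + a \<beta>\<^sub>t \<sigma>(x)\<close>
  for all \<open>x\<close> fails with probability at most \<open>|X| exp (-a\<^sup>2/2) = 1/t\<^sup>2\<close>. On both events
  the maximiser satisfies \<open>f(x\<^sup>*) \<le> f\<^sub>t(x\<^sub>t) \<le> \<mu>(x\<^sub>t) + a \<beta>\<^sub>t \<sigma>(x\<^sub>t) \<le> f(x\<^sub>t) + c\<^sub>t \<sigma>(x\<^sub>t)\<close>,
  since \<open>c\<^sub>t = (1 + a) \<beta>\<^sub>t\<close>; hence \<open>x\<^sub>t\<close> is not saturated.\<close>

lemma std_normal_density_has_real_derivative:
  "(std_normal_density has_real_derivative - x * std_normal_density x) (at x)"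
  unfolding std_normal_density_def by (rule derivative_eq_intros refl | simp)+

lemma std_normal_upper_tail_le:
  fixes a :: real
  assumes "0 < a"
  shows "(\<integral>\<^sup>+x\<in>{a..}. ennreal (std_normal_density x) \<partial>lborel) \<le> ennreal (std_normal_density a / a)"
proof -
  have "(\<integral>\<^sup>+x\<in>{a..}. ennreal (std_normal_density x) \<partial>lborel)
      \<le> (\<integral>\<^sup>+x\<in>{a..}. ennreal (x * std_normal_density x / a) \<partial>lborel)"
    using assms
    by (auto simp: indicator_def field_simps intro!: nn_integral_mono ennreal_leI mult_right_mono)
  also have "\<dots> = ennreal (0 - - (std_normal_density a / a))"
  proof (rule nn_integral_FTC_atLeast[where F = "\<lambda>x. - (std_normal_density x / a)"])
    show "(\<lambda>x. x * std_normal_density x / a) \<in> borel_measurable borel" by measurable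
  next
    fix x assume "a \<le> x"
    then show "0 \<le> x * std_normal_density x / a" using assms by simp
  next
    fix x :: real
    show "((\<lambda>x. - (std_normal_density x / a)) has_real_derivative x * std_normal_density x / a) (at x)"
      using assms by (auto intro!: derivative_eq_intros std_normal_density_has_real_derivative)
  next
    have "(std_normal_density \<longlongrightarrow> 0) at_top"
      unfolding std_normal_density_def by real_asymp
    then show "((\<lambda>x. - (std_normal_density x / a)) \<longlongrightarrow> 0) at_top"
      using tendsto_minus[OF tendsto_divide_zero] by fastforce
  qed
  also have "\<dots> = ennreal (std_normal_density a / a)" using assms by simp
  finally show ?thesis .
qed

lemma std_normal_upper_tail_ge:
  fixes a :: real
  assumes "1 \<le> a"
  shows "ennreal (a * std_normal_density a / (1 + a\<^sup>2))
           \<le> (\<integral>\<^sup>+x\<in>{a..}. ennreal (std_normal_density x) \<partial>lborel)"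
proof -
  define g where "g x = std_normal_density x * (1 - 2 / (1 + x\<^sup>2)\<^sup>2)" for x :: real
  have "(\<integral>\<^sup>+x\<in>{a..}. ennreal (g x) \<partial>lborel) = ennreal (0 - - (a / (1 + a\<^sup>2) * std_normal_density a))"
  proof (rule nn_integral_FTC_atLeast[where F = "\<lambda>x. - (x / (1 + x\<^sup>2) * std_normal_density x)"])
    show "g \<in> borel_measurable borel" unfolding g_def by measurable
  next
    fix x :: real assume "a \<le> x"
    then have "2 \<le> 1 + x\<^sup>2" using assms one_le_power[of x 2] by linarith
    then have "2 \<le> (1 + x\<^sup>2)\<^sup>2"
      using power_increasing[of 1 2 "1 + x\<^sup>2"] by simp
    then have "2 / (1 + x\<^sup>2)\<^sup>2 \<le> 1" by (simp add: divide_le_eq)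
    then show "0 \<le> g x" unfolding g_def by simp
  next
    fix x :: real
    define q where "q = 1 + x\<^sup>2"
    have "q \<noteq> 0" unfolding q_def by (smt (verit) zero_le_power2)
    have "x\<^sup>2 = q - 1" unfolding q_def by simp
    have frac: "x\<^sup>2 / q - (1 - x\<^sup>2) / q\<^sup>2 = 1 - 2 / q\<^sup>2"
      unfolding \<open>x\<^sup>2 = q - 1\<close> using \<open>q \<noteq> 0\<close> by (simp add: field_simps power2_eq_square)
    have "((\<lambda>x. x / (1 + x\<^sup>2)) has_real_derivative (1 - x\<^sup>2) / q\<^sup>2) (at x)"
      using \<open>q \<noteq> 0\<close> unfolding q_def
      by (auto intro!: derivative_eq_intros simp: field_simps power2_eq_square)
    from DERIV_minus[OF DERIV_mult'[OF this std_normal_density_has_real_derivative]]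
    have "((\<lambda>x. - (x / (1 + x\<^sup>2) * std_normal_density x)) has_real_derivative
        - (x / q * (- x * std_normal_density x) + (1 - x\<^sup>2) / q\<^sup>2 * std_normal_density x)) (at x)"
      unfolding q_def .
    moreover have "- (x / q * (- x * std_normal_density x) + (1 - x\<^sup>2) / q\<^sup>2 * std_normal_density x) = g x"
    proof -
      have "- (x / q * (- x * std_normal_density x) + (1 - x\<^sup>2) / q\<^sup>2 * std_normal_density x)
          = std_normal_density x * (x\<^sup>2 / q - (1 - x\<^sup>2) / q\<^sup>2)"
        by (simp add: algebra_simps power2_eq_square)
      also have "\<dots> = g x" unfolding frac unfolding g_def q_def ..
      finally show ?thesis .
    qed
    ultimately show "((\<lambda>x. - (x / (1 + x\<^sup>2) * std_normal_density x)) has_real_derivative g x) (at x)"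
      by simp
  next
    show "((\<lambda>x. - (x / (1 + x\<^sup>2) * std_normal_density x)) \<longlongrightarrow> 0) at_top"
      unfolding std_normal_density_def by real_asymp
  qed
  moreover have "(\<integral>\<^sup>+x\<in>{a..}. ennreal (g x) \<partial>lborel)
      \<le> (\<integral>\<^sup>+x\<in>{a..}. ennreal (std_normal_density x) \<partial>lborel)"
    by (intro nn_integral_mono) (auto simp: g_def indicator_def ennreal_leI mult_left_le)
  ultimately show ?thesis by simp
qed

lemma (in prob_space) gaussian_rv_upper_tail_emeasure:
  assumes "gaussian_rv M Y m v" and "v \<noteq> 0"
  shows "emeasure M {\<omega> \<in> space M. m + a * sqrt v \<le> Y \<omega>}
           = (\<integral>\<^sup>+x\<in>{a..}. ennreal (std_normal_density x) \<partial>lborel)"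
proof -
  have sd: "0 < sqrt v" using assms unfolding gaussian_rv_def by auto
  then have "distributed M lborel (\<lambda>\<omega>. (Y \<omega> - m) / sqrt v) std_normal_density"
    using assms normal_standard_normal_convert[OF sd] unfolding gaussian_rv_def by auto
  moreover have "{\<omega> \<in> space M. m + a * sqrt v \<le> Y \<omega>} = (\<lambda>\<omega>. (Y \<omega> - m) / sqrt v) -` {a..} \<inter> space M"
    using sd by (auto simp: field_simps)
  ultimately show ?thesis by (simp add: distributed_emeasure)
qed

lemma (in prob_space) gaussian_rv_upper_tail_le:
  assumes Y: "gaussian_rv M Y m v" and "1 \<le> a"
  shows "prob {\<omega> \<in> space M. m + a * sqrt v < Y \<omega>} \<le> exp (- a\<^sup>2 / 2)"
proof (cases "v = 0")
  case True
  then have "AE \<omega> in M. \<not> m + a * sqrt v < Y \<omega>"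
    using Y unfolding gaussian_rv_def by auto
  then show ?thesis by (simp add: prob_eq_0_AE)
next
  case False
  have "Y \<in> borel_measurable M" using Y unfolding gaussian_rv_def by simp
  then have "prob {\<omega> \<in> space M. m + a * sqrt v < Y \<omega>} \<le> prob {\<omega> \<in> space M. m + a * sqrt v \<le> Y \<omega>}"
    by (intro finite_measure_mono) auto
  also have "\<dots> \<le> std_normal_density a / a"
    using std_normal_upper_tail_le[of a] \<open>1 \<le> a\<close>
    by (simp add: measure_def gaussian_rv_upper_tail_emeasure[OF Y False] enn2real_leI)
  also have "\<dots> \<le> exp (- a\<^sup>2 / 2)"
  proof -
    have "1 \<le> sqrt (2 * pi)" using pi_gt3 by simp
    then have "1 * 1 \<le> sqrt (2 * pi) * a" using \<open>1 \<le> a\<close> by (intro mult_mono) auto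
    then show ?thesis
      unfolding std_normal_density_def using \<open>1 \<le> a\<close> by (simp add: field_simps mult_le_cancel_left1)
  qed
  finally show ?thesis .
qed

lemma (in prob_space) gaussian_rv_upper_tail_ge:
  assumes Y: "gaussian_rv M Y m v" and "1 \<le> a"
  shows "a * std_normal_density a / (1 + a\<^sup>2) \<le> prob {\<omega> \<in> space M. m + a * sqrt v \<le> Y \<omega>}"
proof (cases "v = 0")
  case True
  have "exp (- a\<^sup>2 / 2) \<le> 1" by simp
  moreover have "1 \<le> sqrt (2 * pi)" using pi_gt3 by simp
  ultimately have "exp (- a\<^sup>2 / 2) \<le> sqrt (2 * pi)" by linarith
  then have "std_normal_density a \<le> 1"
    unfolding std_normal_density_def by (simp add: divide_le_eq)
  moreover have "a * 1 \<le> a * a" using \<open>1 \<le> a\<close> by (intro mult_left_mono) auto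
  then have "a / (1 + a\<^sup>2) \<le> 1" by (simp add: divide_le_eq power2_eq_square add_pos_nonneg)
  ultimately have "a * std_normal_density a / (1 + a\<^sup>2) \<le> 1"
    using mult_mono[of "a / (1 + a\<^sup>2)" 1 "std_normal_density a" 1] \<open>1 \<le> a\<close> by simp
  moreover have "Y \<in> borel_measurable M" using Y unfolding gaussian_rv_def by simp
  then have "{\<omega> \<in> space M. m + a * sqrt v \<le> Y \<omega>} \<in> events" by measurable
  moreover have "AE \<omega> in M. m + a * sqrt v \<le> Y \<omega>"
    using Y True unfolding gaussian_rv_def by auto
  ultimately have "prob {\<omega> \<in> space M. m + a * sqrt v \<le> Y \<omega>} = 1"
    by (simp add: prob_Collect_eq_1)
  with \<open>a * std_normal_density a / (1 + a\<^sup>2) \<le> 1\<close> show ?thesis by simp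
next
  case False
  have "ennreal (a * std_normal_density a / (1 + a\<^sup>2))
      \<le> emeasure M {\<omega> \<in> space M. m + a * sqrt v \<le> Y \<omega>}"
    using std_normal_upper_tail_ge[OF \<open>1 \<le> a\<close>] gaussian_rv_upper_tail_emeasure[OF Y False] by simp
  then show ?thesis by (simp add: emeasure_eq_measure)
qed

lemma gaussian_process_on_marginal:
  assumes "gaussian_process_on M X F m C" and "finite X" and "x \<in> X"
  shows "gaussian_rv M (\<lambda>\<omega>. F \<omega> x) (m x) (C x x)"
proof -
  have "gaussian_rv M (\<lambda>\<omega>. \<Sum>y\<in>X. indicator {x} y * F \<omega> y) (\<Sum>y\<in>X. indicator {x} y * m y)
      (\<Sum>y\<in>X. \<Sum>z\<in>X. indicator {x} y * indicator {x} z * C y z)"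
    using assms(1) unfolding gaussian_process_on_def by blast
  then show ?thesis
    using assms(2,3)
    by (simp add: sum_distrib_left[symmetric] mult.assoc Int_absorb1
        del: Bochner_Integration.sum_indicator_mult)
qed

lemma argmax_not_in_saturated_set:
  fixes g f \<mu> \<sigma> :: "'a \<Rightarrow> real"
  assumes "\<forall>x\<in>X. \<bar>\<mu> x - f x\<bar> \<le> \<beta> * \<sigma> x"
    and "xstar \<in> X" and "y \<in> X" and "g xstar \<le> g y"
    and "\<mu> xstar + \<beta> * \<sigma> xstar \<le> g xstar" and "g y \<le> \<mu> y + a * (\<beta> * \<sigma> y)"
  shows "y \<notin> saturated_set X f xstar (\<beta> * (1 + a)) \<sigma>"
proof -
  have "\<bar>\<mu> xstar - f xstar\<bar> \<le> \<beta> * \<sigma> xstar" and "\<bar>\<mu> y - f y\<bar> \<le> \<beta> * \<sigma> y"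
    using assms(1-3) by auto
  then have "f xstar - f y \<le> \<beta> * (1 + a) * \<sigma> y"
    using assms(4-6) by (simp add: abs_le_iff algebra_simps)
  then show ?thesis by (simp add: saturated_set_def)
qed

lemma (in prob_space) prob_argmax_not_saturated_ge:
  fixes X :: "'b set" and F :: "'a \<Rightarrow> 'b \<Rightarrow> real" and xt :: "'a \<Rightarrow> 'b"
  assumes fin: "finite X" and xstar: "xstar \<in> X" and "0 \<le> \<beta>" and "1 \<le> a"
    and Ef: "\<forall>x\<in>X. \<bar>\<mu> x - f x\<bar> \<le> \<beta> * sqrt (C x x)"
    and gp: "gaussian_process_on M X F \<mu> (\<lambda>x y. \<beta>\<^sup>2 * C x y)"
    and xt: "xt \<in> measurable M (count_space UNIV)"
    and argmax: "\<forall>\<omega>\<in>space M. xt \<omega> \<in> X \<and> (\<forall>y\<in>X. F \<omega> y \<le> F \<omega> (xt \<omega>))"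
  shows "std_normal_density 1 / 2 - card X * exp (- a\<^sup>2 / 2)
           \<le> prob {\<omega> \<in> space M. xt \<omega> \<in> X - saturated_set X f xstar (\<beta> * (1 + a)) (\<lambda>x. sqrt (C x x))}"
proof -
  define \<sigma> where "\<sigma> x = sqrt (C x x)" for x
  have marg: "gaussian_rv M (\<lambda>\<omega>. F \<omega> x) (\<mu> x) (\<beta>\<^sup>2 * C x x)" if "x \<in> X" for x
    using gaussian_process_on_marginal[OF gp fin that] by simp
  have sd: "sqrt (\<beta>\<^sup>2 * C x x) = \<beta> * \<sigma> x" for x
    using \<open>0 \<le> \<beta>\<close> by (simp add: \<sigma>_def real_sqrt_mult)
  define A where "A = {\<omega> \<in> space M. \<mu> xstar + \<beta> * \<sigma> xstar \<le> F \<omega> xstar}"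
  define B where "B x = {\<omega> \<in> space M. \<mu> x + a * (\<beta> * \<sigma> x) < F \<omega> x}" for x
  define T where "T = {\<omega> \<in> space M. xt \<omega> \<in> X - saturated_set X f xstar (\<beta> * (1 + a)) \<sigma>}"
  have cover: "A \<subseteq> T \<union> (\<Union>x\<in>X. B x)"
  proof
    fix \<omega> assume "\<omega> \<in> A"
    moreover have "xt \<omega> \<notin> saturated_set X f xstar (\<beta> * (1 + a)) \<sigma>"
      if "\<omega> \<in> A" "\<omega> \<notin> B (xt \<omega>)"
      using that argmax xstar Ef
      by (intro argmax_not_in_saturated_set[where g = "F \<omega>" and \<mu> = \<mu>])
         (auto simp: A_def B_def \<sigma>_def)
    ultimately show "\<omega> \<in> T \<union> (\<Union>x\<in>X. B x)"
      using argmax unfolding A_def T_def by blast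
  qed
  have F_measurable: "(\<lambda>\<omega>. F \<omega> x) \<in> borel_measurable M" if "x \<in> X" for x
    using marg[OF that] unfolding gaussian_rv_def by simp
  have B_events: "B x \<in> events" if "x \<in> X" for x
    using F_measurable[OF that] unfolding B_def by measurable
  have T_events: "T \<in> events"
    using measurable_sets[OF xt, of "X - saturated_set X f xstar (\<beta> * (1 + a)) \<sigma>"]
    unfolding T_def by (simp add: Int_def conj_commute)
  have "std_normal_density 1 / 2 \<le> prob A"
    using gaussian_rv_upper_tail_ge[OF marg[OF xstar], of 1] unfolding A_def sd by simp
  also have "\<dots> \<le> prob (T \<union> (\<Union>x\<in>X. B x))"
    using cover fin T_events B_events by (intro finite_measure_mono) auto
  also have "\<dots> \<le> prob T + prob (\<Union>x\<in>X. B x)"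
    using fin T_events B_events by (intro measure_Un_le) auto
  also have "\<dots> \<le> prob T + (\<Sum>x\<in>X. prob (B x))"
    using fin B_events measure_UNION_le[of X B M] by simp
  also have "\<dots> \<le> prob T + card X * exp (- a\<^sup>2 / 2)"
    using gaussian_rv_upper_tail_le[OF marg \<open>1 \<le> a\<close>]
      sum_mono[of X "\<lambda>x. prob (B x)" "\<lambda>_. exp (- a\<^sup>2 / 2)"]
    unfolding B_def sd by simp
  finally show ?thesis unfolding T_def \<sigma>_def by simp
qed

lemma beta_t_pos:
  assumes "1 \<le> t" and "1 \<le> N" and "0 < \<delta>" and "\<delta> < 1"
  shows "0 < beta_t t N \<delta>"
proof -
  have "3 * 3 \<le> pi * pi" using pi_gt3 by (intro mult_mono) auto
  moreover have "1 \<le> (real t)\<^sup>2" using assms(1) by simp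
  then have "1 * 1 \<le> (real t)\<^sup>2 * real N" using assms(2) by (intro mult_mono) auto
  ultimately have "9 * 1 \<le> pi\<^sup>2 * ((real t)\<^sup>2 * real N)"
    by (intro mult_mono) (auto simp: power2_eq_square)
  then have "1 < pi\<^sup>2 * (real t)\<^sup>2 * real N / (3 * \<delta>)"
    using assms(3,4) by (simp add: mult.assoc)
  then show ?thesis unfolding beta_t_def by simp
qed

lemma sqrt_two_ln_ge_1:
  fixes y :: real
  assumes "exp 1 \<le> y"
  shows "1 \<le> sqrt (2 * ln y)"
proof -
  have "1 \<le> ln y" using assms by (subst ln_ge_iff) (auto intro: less_le_trans[of 0 "exp 1"])
  then show ?thesis by simp
qed

lemma exp_neg_half_sqrt_two_ln:
  fixes y :: real
  assumes "1 \<le> y"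
  shows "exp (- (sqrt (2 * ln y))\<^sup>2 / 2) = 1 / y"
  using assms by (simp add: exp_minus inverse_eq_divide)

lemma std_normal_density_1_half_ge:
  "1 / (4 * exp 1 * sqrt pi) \<le> std_normal_density 1 / 2"
proof -
  have "sqrt 2 \<le> (2::real)" using real_sqrt_le_mono[of 2 "2\<^sup>2"] by simp
  moreover have "1 \<le> exp (- 1 / 2) * exp (1::real)" by (simp add: mult_exp_exp)
  ultimately have "2 * sqrt 2 \<le> 4 * (exp (- 1 / 2) * exp 1)" by linarith
  then have "2 * sqrt 2 * sqrt pi \<le> 4 * (exp (- 1 / 2) * exp 1) * sqrt pi"
    by (intro mult_right_mono) auto
  then show ?thesis unfolding std_normal_density_def by (simp add: real_sqrt_mult field_simps)
qed

theorem lemma4: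
  fixes X :: "(real ^ 'd) set"
    and k :: "real ^ 'd \<Rightarrow> real ^ 'd \<Rightarrow> real"
    and s2 :: real and \<delta> :: real and t :: nat
    and xs :: "(real ^ 'd) list" and ys :: "real list"
    and f :: "real ^ 'd \<Rightarrow> real" and xstar :: "real ^ 'd"
    and M :: "'s measure"
    and F :: "'s \<Rightarrow> real ^ 'd \<Rightarrow> real"
    and xt :: "'s \<Rightarrow> real ^ 'd"
  assumes "finite X" and "X \<noteq> {}" and "X \<subseteq> cball 0 1"
    and "psd_kernel_on X k"
    and "0 < s2" and "0 < \<delta>" and "\<delta> < 1" and "1 \<le> t"
    and "set xs \<subseteq> X" and "length ys = length xs"
    and "xstar \<in> X" and "\<forall>x\<in>X. f x \<le> f xstar"
    \<comment> \<open>event E^f(t)\<close>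
    and "\<forall>x\<in>X. \<bar>post_mean k s2 xs ys x - f x\<bar>
                  \<le> beta_t t (card X) \<delta> * post_sd k s2 xs x"
    \<comment> \<open>f_t ~ GP(mu_fb, beta_t^2 sigma_fb^2) given the history\<close>
    and "prob_space M"
    and "gaussian_process_on M X F (post_mean k s2 xs ys)
           (\<lambda>x y. (beta_t t (card X) \<delta>)^2 * post_cov k s2 xs x y)"
    \<comment> \<open>x_t = argmax of f_t over X\<close>
    and "xt \<in> measurable M (count_space UNIV)"
    and "\<forall>\<omega>\<in>space M. xt \<omega> \<in> X \<and> (\<forall>y\<in>X. F \<omega> y \<le> F \<omega> (xt \<omega>))"
  shows "measure M {\<omega> \<in> space M. xt \<omega> \<in> X - saturated_set X f xstar
                        (c_t t (card X) \<delta>) (post_sd k s2 xs)}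
           \<ge> 1 / (4 * exp 1 * sqrt pi) - 1 / (real t)^2"
proof (cases "t = 1")
  case True
  \<comment> \<open>then the bound is negative (and \<open>a < 1\<close> is possible, so the argument below does not apply)\<close>
  have "1 * 1 \<le> exp 1 * sqrt pi" using pi_gt3 by (intro mult_mono) auto
  then show ?thesis using True by (simp add: order.trans[OF _ measure_nonneg])
next
  case False
  interpret prob_space M by fact
  define \<beta> where "\<beta> = beta_t t (card X) \<delta>"
  define a where "a = sqrt (2 * ln (card X * (real t)\<^sup>2))"
  have "1 \<le> card X" using assms(1,2) by (simp add: Suc_le_eq card_gt_0_iff)
  moreover have "2 \<le> t" using False \<open>1 \<le> t\<close> by simp
  ultimately have Nt: "4 \<le> card X * (real t)\<^sup>2"
    using mult_mono[of 1 "real (card X)" 4 "(real t)\<^sup>2"] power_mono[of 2 "real t" 2] by simp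
  then have "1 \<le> a" unfolding a_def using exp_le by (intro sqrt_two_ln_ge_1) simp
  have "0 < \<beta>" unfolding \<beta>_def using beta_t_pos \<open>1 \<le> card X\<close> assms(6-8) by blast
  then have "std_normal_density 1 / 2 - card X * exp (- a\<^sup>2 / 2)
      \<le> prob {\<omega> \<in> space M. xt \<omega> \<in> X - saturated_set X f xstar (\<beta> * (1 + a))
                                            (\<lambda>x. sqrt (post_cov k s2 xs x x))}"
    using assms(1,11,13-17) \<open>1 \<le> a\<close>
    by (intro prob_argmax_not_saturated_ge) (auto simp: \<beta>_def post_sd_def)
  moreover have "card X * exp (- a\<^sup>2 / 2) = 1 / (real t)\<^sup>2"
    using Nt exp_neg_half_sqrt_two_ln[of "card X * (real t)\<^sup>2"] \<open>1 \<le> card X\<close> by (simp add: a_def)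
  moreover have "c_t t (card X) \<delta> = \<beta> * (1 + a)" unfolding c_t_def \<beta>_def a_def by simp
  moreover have "post_sd k s2 xs = (\<lambda>x. sqrt (post_cov k s2 xs x x))"
    by (simp add: fun_eq_iff post_sd_def)
  ultimately have "std_normal_density 1 / 2 - 1 / (real t)\<^sup>2 \<le> measure M {\<omega> \<in> space M.
      xt \<omega> \<in> X - saturated_set X f xstar (c_t t (card X) \<delta>) (post_sd k s2 xs)}"
    by simp
  then show ?thesis using std_normal_density_1_half_ge by linarith
qed

end
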